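(* Let $(\mathcal{V},g)$ be a finite-dimensional real scalar product space, let $J_1,\dots,J_m$ be skew-adjoint endomorphisms of $\mathcal{V}$ with $J_iJ_j+J_jJ_i=-2\delta_{ij}\,\mathrm{id}$ for $1\le i,j\le m$, and let $\mu_0,\dots,\mu_m\in\mathbb{R}$. Then the (Clifford) algebraic curvature tensor $R=\mu_0R^0+\sum_{i=1}^m\mu_iR^{J_i}$ is totally Jacobi-dual.
   Context: A scalar product space is a finite-dimensional real vector space with a nondegenerate symmetric bilinear form $g$; $\varepsilon_X=g(X,X)$. $R^0(X,Y,Z,W)=g(Y,Z)g(X,W)-g(X,Z)g(Y,W)$; for skew-adjoint $J$, $R^J(X,Y,Z,W)=g(JX,Z)g(JY,W)-g(JY,Z)g(JX,W)+2g(JX,Y)g(JZ,W)$. The Jacobi operator is $\mathcal{J}_X(Y)=\sum_{i}\varepsilon_{E_i}R(Y,X,X,E_i)E_i$ for an orthonormal basis $(E_i)$. An eigenvector of $\mathcal{J}_X$ is a nonzero $Y$ with $\mathcal{J}_X(Y)=\lambda Y$, $\lambda\in\mathbb{R}$. $R$ is totally Jacobi-dual if for all $X,Y\in\mathcal{V}$ with $X\neq0$ (null or not): whenever $Y$ is an eigenvector of $\mathcal{J}_X$, then $X$ is an eigenvector of $\mathcal{J}_Y$. *)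

theory Defs
  imports "HOL-Analysis.Analysis"
begin

text \<open>A scalar product space: a finite-dimensional real vector space (a type of class
euclidean_space, used only as a finite-dimensional real vector space; its inner product
plays no role) with a nondegenerate symmetric bilinear form g.\<close>

definition scalar_product :: "('a::euclidean_space \<Rightarrow> 'a \<Rightarrow> real) \<Rightarrow> bool" where
  "scalar_product g \<longleftrightarrow> bilinear g \<and> (\<forall>x y. g x y = g y x)
     \<and> (\<forall>x. (\<forall>y. g x y = 0) \<longrightarrow> x = 0)"

definition skew_adjoint :: "('a::euclidean_space \<Rightarrow> 'a \<Rightarrow> real) \<Rightarrow> ('a \<Rightarrow> 'a) \<Rightarrow> bool" where
  "skew_adjoint g J \<longleftrightarrow> linear J \<and> (\<forall>x y. g (J x) y = - g x (J y))"

definition orthonormal_basis :: "('a::euclidean_space \<Rightarrow> 'a \<Rightarrow> real) \<Rightarrow> 'a set \<Rightarrow> bool" where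
  "orthonormal_basis g B \<longleftrightarrow> independent B \<and> span B = UNIV
     \<and> (\<forall>e\<in>B. \<forall>f\<in>B. e \<noteq> f \<longrightarrow> g e f = 0)
     \<and> (\<forall>e\<in>B. g e e = 1 \<or> g e e = -1)"

definition R0 :: "('a \<Rightarrow> 'a \<Rightarrow> real) \<Rightarrow> 'a \<Rightarrow> 'a \<Rightarrow> 'a \<Rightarrow> 'a \<Rightarrow> real" where
  "R0 g X Y Z W = g Y Z * g X W - g X Z * g Y W"

definition RJ :: "('a \<Rightarrow> 'a \<Rightarrow> real) \<Rightarrow> ('a \<Rightarrow> 'a) \<Rightarrow> 'a \<Rightarrow> 'a \<Rightarrow> 'a \<Rightarrow> 'a \<Rightarrow> real" where
  "RJ g J X Y Z W = g (J X) Z * g (J Y) W - g (J Y) Z * g (J X) W + 2 * g (J X) Y * g (J Z) W"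

definition jacobi_op :: "('a::euclidean_space \<Rightarrow> 'a \<Rightarrow> real) \<Rightarrow> ('a \<Rightarrow> 'a \<Rightarrow> 'a \<Rightarrow> 'a \<Rightarrow> real)
    \<Rightarrow> 'a \<Rightarrow> 'a \<Rightarrow> 'a" where
  "jacobi_op g R X Y = (let B = (SOME B. orthonormal_basis g B) in
     (\<Sum>E\<in>B. (g E E * R Y X X E) *\<^sub>R E))"

definition jacobi_eigenvector :: "('a::euclidean_space \<Rightarrow> 'a \<Rightarrow> real) \<Rightarrow> ('a \<Rightarrow> 'a \<Rightarrow> 'a \<Rightarrow> 'a \<Rightarrow> real)
    \<Rightarrow> 'a \<Rightarrow> 'a \<Rightarrow> bool" where
  "jacobi_eigenvector g R X Y \<longleftrightarrow> Y \<noteq> 0 \<and> (\<exists>c::real. jacobi_op g R X Y = c *\<^sub>R Y)"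

definition totally_jacobi_dual :: "('a::euclidean_space \<Rightarrow> 'a \<Rightarrow> real) \<Rightarrow> ('a \<Rightarrow> 'a \<Rightarrow> 'a \<Rightarrow> 'a \<Rightarrow> real) \<Rightarrow> bool" where
  "totally_jacobi_dual g R \<longleftrightarrow>
     (\<forall>X Y. X \<noteq> 0 \<longrightarrow> jacobi_eigenvector g R X Y \<longrightarrow> jacobi_eigenvector g R Y X)"

end

theory Submission
  imports Defs
begin

(* Since g(J_X Y, W) = R(Y, X, X, W), the Clifford tensor has
     J_X Y = mu_0 (g(X,X) Y - g(X,Y) X) + T X,   J_Y X = mu_0 (g(Y,Y) X - g(X,Y) Y) - T Y
   with T = sum_i 3 mu_i g(J_i Y, X) J_i; the sign flip comes from g(J_i X, Y) = - g(J_i Y, X).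
   By the Clifford relations T^2 = -t id with t = sum_i (3 mu_i g(J_i Y, X))^2 >= 0, so T is a
   multiple of a complex structure, and such a T turns the eigenvector relation for J_X at Y
   into one for J_Y at X. *)

lemma clifford_combination_square:
  fixes J :: "'i \<Rightarrow> 'a::real_vector \<Rightarrow> 'a"
  assumes "finite A" and lin: "\<And>i. i \<in> A \<Longrightarrow> linear (J i)"
    and clifford: "\<And>i j x. i \<in> A \<Longrightarrow> j \<in> A \<Longrightarrow>
      J i (J j x) + J j (J i x) = (if i = j then -2 else 0) *\<^sub>R x"
  shows "(\<Sum>i\<in>A. c i *\<^sub>R J i (\<Sum>j\<in>A. c j *\<^sub>R J j x)) = - (\<Sum>i\<in>A. (c i)\<^sup>2) *\<^sub>R x"
proof -
  define T where "T = (\<Sum>i\<in>A. \<Sum>j\<in>A. (c i * c j) *\<^sub>R J i (J j x))"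
  have T: "(\<Sum>i\<in>A. c i *\<^sub>R J i (\<Sum>j\<in>A. c j *\<^sub>R J j x)) = T"
    unfolding T_def
    by (intro sum.cong refl) (simp add: lin linear_sum linear_scale scaleR_sum_right)
  have "T + T = (\<Sum>i\<in>A. \<Sum>j\<in>A. (c i * c j) *\<^sub>R J i (J j x))
      + (\<Sum>i\<in>A. \<Sum>j\<in>A. (c i * c j) *\<^sub>R J j (J i x))"
    unfolding T_def by (subst (2) sum.swap) (simp add: mult.commute)
  also have "\<dots> = (\<Sum>i\<in>A. \<Sum>j\<in>A. (c i * c j) *\<^sub>R (J i (J j x) + J j (J i x)))"
    by (simp add: sum.distrib[symmetric] scaleR_add_right)
  also have "\<dots> = (\<Sum>i\<in>A. \<Sum>j\<in>A. if i = j then (-2 * (c i)\<^sup>2) *\<^sub>R x else 0)"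
    by (intro sum.cong refl) (simp add: clifford power2_eq_square)
  also have "\<dots> = (\<Sum>i\<in>A. (-2 * (c i)\<^sup>2) *\<^sub>R x)"
    by (intro sum.cong refl) (simp add: \<open>finite A\<close>)
  also have "\<dots> = 2 *\<^sub>R (- (\<Sum>i\<in>A. (c i)\<^sup>2) *\<^sub>R x)"
    by (simp add: sum_negf scaleR_sum_left scaleR_sum_right)
  finally have "(1 / 2 :: real) *\<^sub>R (2 *\<^sub>R T)
      = (1 / 2 :: real) *\<^sub>R (2 *\<^sub>R (- (\<Sum>i\<in>A. (c i)\<^sup>2) *\<^sub>R x))"
    by (simp only: scaleR_2)
  then show ?thesis
    using T by simp
qed

(* If c Y = a X + T X with c \<noteq> 0, then c (a Y - T Y) = (a^2 + t) X; if c = 0, then X is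
   a real eigenvector of T, which forces t = 0 and so T = 0. *)
lemma complex_structure_eigenvector_dual:
  fixes T :: "'a::real_vector \<Rightarrow> 'a"
  assumes lin: "linear T" and square: "\<And>v. T (T v) = - t *\<^sub>R v" and "t \<ge> 0"
    and degenerate: "\<And>v. t = 0 \<Longrightarrow> T v = 0"
    and X: "X \<noteq> 0" and eig: "c *\<^sub>R Y = a *\<^sub>R X + T X"
  shows "\<exists>\<nu>. a *\<^sub>R Y - T Y = \<nu> *\<^sub>R X"
proof (cases "c = 0")
  case False
  have "c *\<^sub>R (a *\<^sub>R Y - T Y) = a *\<^sub>R (c *\<^sub>R Y) - T (c *\<^sub>R Y)"
    by (simp add: algebra_simps linear_scale[OF lin])
  also have "\<dots> = (a\<^sup>2 + t) *\<^sub>R X"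
    by (simp add: eig linear_add[OF lin] linear_scale[OF lin] square algebra_simps power2_eq_square)
  finally have "(1 / c) *\<^sub>R (c *\<^sub>R (a *\<^sub>R Y - T Y)) = ((a\<^sup>2 + t) / c) *\<^sub>R X"
    by simp
  then show ?thesis
    using False by auto
next
  case True
  then have "T X = (- a) *\<^sub>R X"
    using eig by (simp add: eq_neg_iff_add_eq_0 add.commute)
  then have "(a\<^sup>2 + t) *\<^sub>R X = 0"
    using square[of X]
    by (simp add: linear_neg[OF lin] linear_scale[OF lin] algebra_simps power2_eq_square)
  then have "a\<^sup>2 + t = 0"
    using X by simp
  then have "a = 0" "t = 0"
    using \<open>t \<ge> 0\<close> by (auto simp: add_nonneg_eq_0_iff)
  then show ?thesis
    using degenerate by auto
qed

lemma clifford_eigenvector_dual: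
  fixes J :: "'i \<Rightarrow> 'a::real_vector \<Rightarrow> 'a"
  assumes "finite A" and lin: "\<And>i. i \<in> A \<Longrightarrow> linear (J i)"
    and clifford: "\<And>i j x. i \<in> A \<Longrightarrow> j \<in> A \<Longrightarrow>
      J i (J j x) + J j (J i x) = (if i = j then -2 else 0) *\<^sub>R x"
    and X: "X \<noteq> 0" and eig: "d *\<^sub>R Y = a *\<^sub>R X + (\<Sum>i\<in>A. c i *\<^sub>R J i X)"
  shows "\<exists>\<nu>. a *\<^sub>R Y - (\<Sum>i\<in>A. c i *\<^sub>R J i Y) = \<nu> *\<^sub>R X"
proof (rule complex_structure_eigenvector_dual[where T = "\<lambda>v. \<Sum>i\<in>A. c i *\<^sub>R J i v"])
  show "linear (\<lambda>v. \<Sum>i\<in>A. c i *\<^sub>R J i v)"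
    by (intro linear_compose_sum ballI linear_compose_scale_right lin)
  show "(\<Sum>i\<in>A. c i *\<^sub>R J i (\<Sum>j\<in>A. c j *\<^sub>R J j v)) = - (\<Sum>i\<in>A. (c i)\<^sup>2) *\<^sub>R v" for v
    by (rule clifford_combination_square[OF \<open>finite A\<close> lin clifford])
  show "(\<Sum>i\<in>A. (c i)\<^sup>2) \<ge> 0"
    by (simp add: sum_nonneg)
  show "(\<Sum>i\<in>A. c i *\<^sub>R J i v) = 0" if "(\<Sum>i\<in>A. (c i)\<^sup>2) = 0" for v
    using that \<open>finite A\<close> by (simp add: sum_nonneg_eq_0_iff)
qed (use X eig in auto)

definition nondegenerate_on :: "('a::real_vector \<Rightarrow> 'a \<Rightarrow> real) \<Rightarrow> 'a set \<Rightarrow> bool" where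
  "nondegenerate_on g U \<longleftrightarrow> (\<forall>x\<in>U. (\<forall>y\<in>U. g x y = 0) \<longrightarrow> x = 0)"

definition g_orthonormal :: "('a \<Rightarrow> 'a \<Rightarrow> real) \<Rightarrow> 'a set \<Rightarrow> bool" where
  "g_orthonormal g B \<longleftrightarrow>
     (\<forall>e\<in>B. \<forall>f\<in>B. e \<noteq> f \<longrightarrow> g e f = 0) \<and> (\<forall>e\<in>B. g e e = 1 \<or> g e e = -1)"

context
  fixes g :: "'a::euclidean_space \<Rightarrow> 'a \<Rightarrow> real"
  assumes scalar_product: "scalar_product g"
begin

lemma bilinear_g: "bilinear g"
  using scalar_product by (simp add: scalar_product_def)

lemma g_commute: "g x y = g y x"
  using scalar_product by (simp add: scalar_product_def)

lemmas g_bilinear_simps = bilinear_ladd[OF bilinear_g] bilinear_radd[OF bilinear_g]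
  bilinear_lsub[OF bilinear_g] bilinear_rsub[OF bilinear_g]
  bilinear_lmul[OF bilinear_g] bilinear_rmul[OF bilinear_g]
  bilinear_lzero[OF bilinear_g] bilinear_rzero[OF bilinear_g]

lemma g_sum_left: "g (\<Sum>i\<in>A. f i) w = (\<Sum>i\<in>A. g (f i) w)"
proof -
  have "linear (\<lambda>v. g v w)"
    using bilinear_g by (simp add: bilinear_def)
  then show ?thesis
    by (rule linear_sum)
qed

lemma nondegenerate_on_UNIV: "nondegenerate_on g UNIV"
  using scalar_product by (simp add: scalar_product_def nondegenerate_on_def)

lemma nondegenerate_on_non_isotropic:
  assumes "subspace U" "nondegenerate_on g U" "U \<noteq> {0}"
  shows "\<exists>x\<in>U. g x x \<noteq> 0"
proof (rule ccontr)
  assume "\<not> ?thesis"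
  then have isotropic: "g x x = 0" if "x \<in> U" for x
    using that by blast
  obtain u where u: "u \<in> U" "u \<noteq> 0"
    using assms(1,3) subspace_0 by blast
  then obtain y where y: "y \<in> U" "g u y \<noteq> 0"
    using assms(2) by (auto simp: nondegenerate_on_def)
  have "g (u + y) (u + y) = 2 * g u y + g u u + g y y"
    by (simp add: g_bilinear_simps g_commute[of y u])
  moreover have "u + y \<in> U"
    using assms(1) u y by (simp add: subspace_add)
  ultimately show False
    using isotropic u y by simp
qed

lemma normalize_non_isotropic:
  assumes "g x x \<noteq> 0"
  shows "g ((1 / sqrt \<bar>g x x\<bar>) *\<^sub>R x) ((1 / sqrt \<bar>g x x\<bar>) *\<^sub>R x) \<in> {1, -1}"
proof -
  have "g ((1 / sqrt \<bar>g x x\<bar>) *\<^sub>R x) ((1 / sqrt \<bar>g x x\<bar>) *\<^sub>R x) = g x x / \<bar>g x x\<bar>"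
    by (simp add: g_bilinear_simps real_sqrt_mult[symmetric])
  then show ?thesis
    using assms by (cases "g x x > 0") auto
qed

lemma subspace_g_orthogonal: "subspace U \<Longrightarrow> subspace {v\<in>U. g e v = 0}"
  unfolding subspace_def by (auto simp: g_bilinear_simps)

lemma g_orthogonal_projection:
  assumes "subspace U" "e \<in> U" "z \<in> U" "g e e \<noteq> 0"
  shows "z - (g e z / g e e) *\<^sub>R e \<in> {v\<in>U. g e v = 0}"
  using assms by (simp add: subspace_diff subspace_scale g_bilinear_simps)

lemma nondegenerate_on_g_orthogonal:
  assumes U: "subspace U" "nondegenerate_on g U" and e: "e \<in> U" "g e e \<noteq> 0"
  shows "nondegenerate_on g {v\<in>U. g e v = 0}"
  unfolding nondegenerate_on_def
proof (intro ballI impI)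
  fix v assume v: "v \<in> {v\<in>U. g e v = 0}" and orth: "\<forall>y\<in>{v\<in>U. g e v = 0}. g v y = 0"
  have "g v z = 0" if "z \<in> U" for z
  proof -
    have "g v (z - (g e z / g e e) *\<^sub>R e) = 0"
      using orth g_orthogonal_projection[OF U(1) e(1) that e(2)] by blast
    moreover have "g v e = 0"
      using v g_commute[of v e] by simp
    ultimately show ?thesis
      by (simp add: g_bilinear_simps)
  qed
  then show "v = 0"
    using U(2) v by (auto simp: nondegenerate_on_def)
qed

lemma span_insert_g_orthogonal:
  assumes U: "subspace U" and e: "e \<in> U" "g e e \<noteq> 0"
  shows "span (insert e {v\<in>U. g e v = 0}) = U"
proof
  show "span (insert e {v\<in>U. g e v = 0}) \<subseteq> U"
    using U e by (intro span_minimal) auto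
  show "U \<subseteq> span (insert e {v\<in>U. g e v = 0})"
  proof
    fix z assume "z \<in> U"
    then have "z - (g e z / g e e) *\<^sub>R e + (g e z / g e e) *\<^sub>R e \<in> span (insert e {v\<in>U. g e v = 0})"
      using g_orthogonal_projection[OF U e(1) _ e(2)]
      by (intro span_add span_scale) (auto intro: span_base)
    then show "z \<in> span (insert e {v\<in>U. g e v = 0})"
      by simp
  qed
qed

lemma g_orthonormal_basis_of_subspace:
  assumes "subspace U" "nondegenerate_on g U"
  shows "\<exists>B. independent B \<and> span B = U \<and> g_orthonormal g B"
  using assms
proof (induction "dim U" arbitrary: U rule: less_induct)
  case less
  show ?case
  proof (cases "U = {0}")
    case True
    then show ?thesis
      by (intro exI[of _ "{}"]) (auto simp: g_orthonormal_def independent_empty)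
  next
    case False
    then obtain x where x: "x \<in> U" "g x x \<noteq> 0"
      using nondegenerate_on_non_isotropic less.prems by blast
    define e where "e = (1 / sqrt \<bar>g x x\<bar>) *\<^sub>R x"
    define U' where "U' = {v\<in>U. g e v = 0}"
    have e: "e \<in> U" "g e e \<in> {1, -1}"
      using x less.prems(1) normalize_non_isotropic by (auto simp: e_def subspace_scale)
    then have ee: "g e e \<noteq> 0"
      by auto
    have "e \<notin> U'"
      using ee by (simp add: U'_def)
    moreover have U': "subspace U'" "nondegenerate_on g U'"
      unfolding U'_def using less.prems e(1) ee
      by (auto intro: subspace_g_orthogonal nondegenerate_on_g_orthogonal)
    moreover have "U' \<subseteq> U"
      by (auto simp: U'_def)
    ultimately have "U' \<subset> U"
      using e(1) by blast
    then have "dim U' < dim U"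
      using U'(1) less.prems(1) by (metis dim_psubset span_eq_iff)
    then obtain B' where B': "independent B'" "span B' = U'" "g_orthonormal g B'"
      using less.hyps U' by blast
    show ?thesis
    proof (intro exI[of _ "insert e B'"] conjI)
      show "independent (insert e B')"
        using B'(1,2) \<open>e \<notin> U'\<close> by (simp add: independent_insertI)
      have "span (insert e B') = span (insert e U')"
        unfolding B'(2)[symmetric] by (simp only: span_insert span_span)
      then show "span (insert e B') = U"
        using span_insert_g_orthogonal[OF less.prems(1) e(1) ee] by (simp add: U'_def)
      have "g e f = 0" if "f \<in> B'" for f
        using that B'(2) span_base[of f B'] by (auto simp: U'_def)
      then show "g_orthonormal g (insert e B')"
        using B'(3) e(2) by (auto simp: g_orthonormal_def g_commute)
    qed
  qed
qed

lemma orthonormal_basis_exists: "\<exists>B. orthonormal_basis g B"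
  using g_orthonormal_basis_of_subspace[OF subspace_UNIV nondegenerate_on_UNIV]
  by (auto simp: orthonormal_basis_def g_orthonormal_def)

lemma orthonormal_basis_expansion:
  assumes B: "orthonormal_basis g B"
  shows "(\<Sum>E\<in>B. (g E E * g V E) *\<^sub>R E) = V"
proof -
  have fin: "finite B"
    using B by (simp add: orthonormal_basis_def independent_imp_finite)
  have "V \<in> span B"
    using B by (simp add: orthonormal_basis_def)
  then obtain c where c: "V = (\<Sum>F\<in>B. c F *\<^sub>R F)"
    using span_finite[OF fin] by auto
  have "g V E = c E * g E E" if E: "E \<in> B" for E
  proof -
    have "g V E = (\<Sum>F\<in>B. c F * g F E)"
      by (simp add: c g_sum_left g_bilinear_simps)
    also have "\<dots> = (\<Sum>F\<in>{E}. c F * g F E)"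
      using B E fin unfolding orthonormal_basis_def by (intro sum.mono_neutral_right) auto
    finally show ?thesis
      by simp
  qed
  moreover have "g E E * g E E = 1" if "E \<in> B" for E
    using B that by (auto simp: orthonormal_basis_def)
  ultimately have "(\<Sum>E\<in>B. (g E E * g V E) *\<^sub>R E) = (\<Sum>E\<in>B. c E *\<^sub>R E)"
    by (intro sum.cong refl) (simp add: mult.left_commute)
  then show ?thesis
    using c by simp
qed

lemma jacobi_op_eqI:
  assumes "\<And>W. R Y X X W = g V W"
  shows "jacobi_op g R X Y = V"
proof -
  have "orthonormal_basis g (SOME B. orthonormal_basis g B)"
    using orthonormal_basis_exists by (rule someI_ex)
  then show ?thesis
    unfolding jacobi_op_def Let_def assms using orthonormal_basis_expansion by blast
qed

lemma skew_adjoint_swap: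
  assumes "skew_adjoint g J"
  shows "g (J x) y = - g (J y) x"
  using assms by (simp add: skew_adjoint_def g_commute[of x])

lemma skew_adjoint_isotropic:
  assumes "skew_adjoint g J"
  shows "g (J x) x = 0"
  using skew_adjoint_swap[OF assms, of x x] by simp

lemma R0_jacobi: "R0 g Y X X W = g (g X X *\<^sub>R Y - g X Y *\<^sub>R X) W"
  by (simp add: R0_def g_bilinear_simps g_commute[of Y X])

lemma RJ_jacobi:
  assumes "skew_adjoint g J"
  shows "RJ g J Y X X W = g ((3 * g (J Y) X) *\<^sub>R J X) W"
  by (simp add: RJ_def skew_adjoint_isotropic[OF assms] g_bilinear_simps)

lemma jacobi_op_clifford_tensor:
  assumes "\<And>i. i \<in> A \<Longrightarrow> skew_adjoint g (J i)"
  shows "jacobi_op g (\<lambda>X Y Z W. \<mu> 0 * R0 g X Y Z W + (\<Sum>i\<in>A. \<mu> i * RJ g (J i) X Y Z W)) X Y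
    = \<mu> 0 *\<^sub>R (g X X *\<^sub>R Y - g X Y *\<^sub>R X) + (\<Sum>i\<in>A. (3 * \<mu> i * g (J i Y) X) *\<^sub>R J i X)"
  by (rule jacobi_op_eqI)
    (simp add: R0_jacobi RJ_jacobi assms g_bilinear_simps g_sum_left sum_distrib_left ac_simps)

end

theorem mainTheorem5:
  fixes g :: "'a::euclidean_space \<Rightarrow> 'a \<Rightarrow> real"
    and J :: "nat \<Rightarrow> 'a \<Rightarrow> 'a"
    and \<mu> :: "nat \<Rightarrow> real"
    and m :: nat
  assumes "scalar_product g"
    and "\<And>i. i \<in> {1..m} \<Longrightarrow> skew_adjoint g (J i)"
    and "\<And>i j x. i \<in> {1..m} \<Longrightarrow> j \<in> {1..m} \<Longrightarrow>
           J i (J j x) + J j (J i x) = (if i = j then -2 else 0) *\<^sub>R x"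
  shows "totally_jacobi_dual g
           (\<lambda>X Y Z W. \<mu> 0 * R0 g X Y Z W + (\<Sum>i=1..m. \<mu> i * RJ g (J i) X Y Z W))"
  unfolding totally_jacobi_dual_def jacobi_eigenvector_def
proof (intro allI impI, elim conjE exE)
  let ?R = "\<lambda>X Y Z W. \<mu> 0 * R0 g X Y Z W + (\<Sum>i=1..m. \<mu> i * RJ g (J i) X Y Z W)"
  fix X Y :: 'a and c :: real
  assume X: "X \<noteq> 0" and eig: "jacobi_op g ?R X Y = c *\<^sub>R Y"
  define \<kappa> where "\<kappa> i = 3 * \<mu> i * g (J i Y) X" for i
  have lin: "linear (J i)" if "i \<in> {1..m}" for i
    using assms(2)[OF that] by (simp add: skew_adjoint_def)
  have "jacobi_op g ?R X Y = \<mu> 0 *\<^sub>R (g X X *\<^sub>R Y - g X Y *\<^sub>R X) + (\<Sum>i=1..m. \<kappa> i *\<^sub>R J i X)"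
    unfolding \<kappa>_def by (rule jacobi_op_clifford_tensor[OF assms(1,2)])
  with eig have "(c - \<mu> 0 * g X X) *\<^sub>R Y = (- \<mu> 0 * g X Y) *\<^sub>R X + (\<Sum>i=1..m. \<kappa> i *\<^sub>R J i X)"
    by (simp add: algebra_simps)
  then obtain \<nu> where \<nu>: "(- \<mu> 0 * g X Y) *\<^sub>R Y - (\<Sum>i=1..m. \<kappa> i *\<^sub>R J i Y) = \<nu> *\<^sub>R X"
    using clifford_eigenvector_dual[OF finite_atLeastAtMost lin assms(3) X] by blast
  have "jacobi_op g ?R Y X = \<mu> 0 *\<^sub>R (g Y Y *\<^sub>R X - g Y X *\<^sub>R Y)
      + (\<Sum>i=1..m. (3 * \<mu> i * g (J i X) Y) *\<^sub>R J i Y)"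
    by (rule jacobi_op_clifford_tensor[OF assms(1,2)])
  also have "(\<Sum>i=1..m. (3 * \<mu> i * g (J i X) Y) *\<^sub>R J i Y) = - (\<Sum>i=1..m. \<kappa> i *\<^sub>R J i Y)"
    unfolding \<kappa>_def sum_negf[symmetric]
    by (intro sum.cong refl) (simp add: skew_adjoint_swap[OF assms(1,2), where x = X and y = Y])
  finally have "jacobi_op g ?R Y X
      = (\<mu> 0 * g Y Y) *\<^sub>R X + ((- \<mu> 0 * g X Y) *\<^sub>R Y - (\<Sum>i=1..m. \<kappa> i *\<^sub>R J i Y))"
    by (simp add: g_commute[OF assms(1), of Y X] algebra_simps)
  then have "jacobi_op g ?R Y X = (\<mu> 0 * g Y Y + \<nu>) *\<^sub>R X"
    by (simp only: \<nu> scaleR_add_left)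
  with X show "X \<noteq> 0 \<and> (\<exists>c. jacobi_op g ?R Y X = c *\<^sub>R X)"
    by blast
qed

end
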